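(* Let $m,d\geq1$ and let $\mathcal{A}\in\mathbb{T}_{2m,d}$ be Einstein-symmetric. If Z-eigenvalues of $\mathcal{A}$ exist, then $\lambda^E_{\max}(\mathcal{A})\geq\lambda^Z_{\max}(\mathcal{A})$.
   Context: $\mathbb{T}_{2m,d}$ is the set of real tensors $\mathcal{A}=(a_{i_1\ldots i_{2m}})$ of order $2m$ with every index in $\{1,\ldots,d\}$. The Einstein product of $\mathcal{A},\mathcal{B}\in\mathbb{T}_{2m,d}$ is $(\mathcal{A}*\mathcal{B})_{i_1\ldots i_mj_1\ldots j_m}=\sum_{k_1,\ldots,k_m}a_{i_1\ldots i_mk_1\ldots k_m}b_{k_1\ldots k_mj_1\ldots j_m}$. Transpose: $(\mathcal{A}^\top)_{i_1\ldots i_mj_1\ldots j_m}=a_{j_1\ldots j_mi_1\ldots i_m}$; Einstein-symmetric means $\mathcal{A}^\top=\mathcal{A}$. Diagonal means $a_{i_1\ldots i_mj_1\ldots j_m}=0$ unless $i_k=j_k$ for all $k$; $\mathcal{I}^E$ is diagonal with all entries $a_{i_1\ldots i_mi_1\ldots i_m}=1$; $\mathcal{U}$ is Einstein-orthogonal if $\mathcal{U}^\top*\mathcal{U}=\mathcal{I}^E$. An Einstein-symmetric $\mathcal{A}$ has a decomposition $\mathcal{A}=\mathcal{U}*\mathcal{D}*\mathcal{U}^\top$ with $\mathcal{U}$ Einstein-orthogonal and $\mathcal{D}$ Einstein-symmetric diagonal; the diagonal entries $d_{i_1\ldots i_mi_1\ldots i_m}$ of $\mathcal{D}$ are the Einstein-eigenvalues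 of $\mathcal{A}$ (equivalently, the eigenvalues of the $d^m\times d^m$ matrix $f(\mathcal{A})_{ij}=a_{i_1\ldots i_mj_1\ldots j_m}$, $i=i_1+\sum_{k=2}^m(i_k-1)d^{k-1}$, $j$ likewise), and $\lambda^E_{\max}(\mathcal{A})$ is the largest of them. A real $\lambda$ is a Z-eigenvalue of $\mathcal{A}$ if there is $x\in\mathbb{R}^d$ with $x^\top x=1$ and $\mathcal{A}x^{2m-1}=\lambda x$, where $(\mathcal{A}x^{2m-1})_i=\sum_{i_2,\ldots,i_{2m}}a_{ii_2\ldots i_{2m}}x_{i_2}\cdots x_{i_{2m}}$; $\lambda^Z_{\max}(\mathcal{A})$ is the largest Z-eigenvalue. *)

theory Defs
  imports Complex_Main "Jordan_Normal_Form.Char_Poly"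
begin

text \<open>A tensor in T_{2m,d} is represented as a function from index lists to reals;
  only lists of length 2m with all entries in {0..<d} (0-based indices) are relevant.\<close>

type_synonym tensor = "nat list \<Rightarrow> real"

definition idx_lists :: "nat \<Rightarrow> nat \<Rightarrow> nat list set" where
  "idx_lists k d = {xs. length xs = k \<and> set xs \<subseteq> {..<d}}"

definition einstein_symmetric :: "nat \<Rightarrow> nat \<Rightarrow> tensor \<Rightarrow> bool" where
  "einstein_symmetric m d A \<longleftrightarrow>
     (\<forall>is \<in> idx_lists m d. \<forall>js \<in> idx_lists m d. A (is @ js) = A (js @ is))"

text \<open>Multi-index (i_1,...,i_m) (0-based) corresponding to the linear index
  n = i_1 + i_2 d + ... + i_m d^(m-1) (0-based version of the paper's unfolding).\<close>
definition digits :: "nat \<Rightarrow> nat \<Rightarrow> nat \<Rightarrow> nat list" where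
  "digits m d n = map (\<lambda>k. n div d ^ k mod d) [0..<m]"

definition unfold_mat :: "nat \<Rightarrow> nat \<Rightarrow> tensor \<Rightarrow> real mat" where
  "unfold_mat m d A = mat (d ^ m) (d ^ m) (\<lambda>(i, j). A (digits m d i @ digits m d j))"

definition einstein_eigenvalue :: "nat \<Rightarrow> nat \<Rightarrow> tensor \<Rightarrow> real \<Rightarrow> bool" where
  "einstein_eigenvalue m d A lam \<longleftrightarrow> eigenvalue (unfold_mat m d A) lam"

definition lambda_E_max :: "nat \<Rightarrow> nat \<Rightarrow> tensor \<Rightarrow> real" where
  "lambda_E_max m d A = Max {lam. einstein_eigenvalue m d A lam}"

definition tensor_apply :: "nat \<Rightarrow> nat \<Rightarrow> tensor \<Rightarrow> (nat \<Rightarrow> real) \<Rightarrow> nat \<Rightarrow> real" where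
  "tensor_apply m d A x i =
     (\<Sum>js \<in> idx_lists (2 * m - 1) d. A (i # js) * (\<Prod>k<2 * m - 1. x (js ! k)))"

definition Z_eigenvalue :: "nat \<Rightarrow> nat \<Rightarrow> tensor \<Rightarrow> real \<Rightarrow> bool" where
  "Z_eigenvalue m d A lam \<longleftrightarrow>
     (\<exists>x :: nat \<Rightarrow> real. (\<Sum>i<d. x i ^ 2) = 1 \<and>
        (\<forall>i<d. tensor_apply m d A x i = lam * x i))"

text \<open>Largest Z-eigenvalue (the set of Z-eigenvalues is compact, so its supremum is its maximum).\<close>
definition lambda_Z_max :: "nat \<Rightarrow> nat \<Rightarrow> tensor \<Rightarrow> real" where
  "lambda_Z_max m d A = Sup {lam. Z_eigenvalue m d A lam}"

end

(* If (lambda, x) is a Z-eigenpair, the m-fold tensor power y of x is a unit vector of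
   length d^m with y^T f(A) y = A x^(2m) = lambda.  For the symmetric matrix f(A) this
   value is bounded by an eigenvalue: the quadratic form attains its maximum mu on the
   compact unit sphere at some v, and v is an eigenvector for mu because mu I - f(A) is
   positive semidefinite and its quadratic form vanishes at v. *)

theory Submission
  imports Defs "HOL-Analysis.Function_Topology"
begin

definition bilin_form :: "nat \<Rightarrow> (nat \<Rightarrow> nat \<Rightarrow> real) \<Rightarrow> (nat \<Rightarrow> real) \<Rightarrow> (nat \<Rightarrow> real) \<Rightarrow> real"
  where "bilin_form n C v w = (\<Sum>i<n. \<Sum>j<n. C i j * v i * w j)"

(* The support condition makes this sphere compact in the product topology of nat => real. *)
definition unit_vecs_on :: "nat \<Rightarrow> (nat \<Rightarrow> real) set"
  where "unit_vecs_on n = {v. (\<Sum>i<n. v i ^ 2) = 1 \<and> (\<forall>i\<ge>n. v i = 0)}"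

lemma bilin_form_add_scaled:
  "bilin_form n C (\<lambda>i. v i + t * w i) (\<lambda>i. v i + t * w i) =
   bilin_form n C v v + t * (bilin_form n C v w + bilin_form n C w v) + t\<^sup>2 * bilin_form n C w w"
  by (simp add: bilin_form_def algebra_simps sum.distrib sum_distrib_left power2_eq_square)

lemma bilin_form_commute:
  assumes "\<forall>i<n. \<forall>j<n. C i j = C j i"
  shows "bilin_form n C w v = bilin_form n C v w"
  unfolding bilin_form_def using assms
  by (subst sum.swap) (auto intro!: sum.cong simp: mult_ac)

lemma bilin_form_scale: "bilin_form n C (\<lambda>i. c * v i) (\<lambda>i. c * v i) = c\<^sup>2 * bilin_form n C v v"
  by (simp add: bilin_form_def sum_distrib_left power2_eq_square mult_ac)

lemma bilin_form_image_left: "bilin_form n C (\<lambda>i. \<Sum>j<n. C i j * v j) v = (\<Sum>i<n. (\<Sum>j<n. C i j * v j)\<^sup>2)"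
  by (simp add: bilin_form_def power2_eq_square sum_distrib_left mult_ac)

lemma bilin_form_diag_minus:
  "bilin_form n (\<lambda>i j. (if i = j then \<mu> else 0) - C i j) v w = \<mu> * (\<Sum>i<n. v i * w i) - bilin_form n C v w"
proof -
  have "bilin_form n (\<lambda>i j. if i = j then \<mu> else 0) v w = \<mu> * (\<Sum>i<n. v i * w i)"
    by (simp add: bilin_form_def sum_distrib_left if_distrib[of "\<lambda>x. x * _"] mult.assoc cong: if_cong)
  then show ?thesis
    by (simp add: bilin_form_def left_diff_distrib sum_subtractf)
qed

lemma linear_coeff_zero_if_nonneg:
  fixes a b :: real
  assumes "\<forall>t. 0 \<le> a * t + b * t\<^sup>2"
  shows "a = 0"
proof (rule ccontr)
  assume "a \<noteq> 0"
  define c where "c = \<bar>b\<bar> + 1"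
  have "c > 0" "c - b > 0" unfolding c_def by auto
  define t where "t = - a / c"
  have "a * t + b * t\<^sup>2 = - (a\<^sup>2 * (c - b)) / c\<^sup>2"
    unfolding t_def using \<open>c > 0\<close> by (simp add: field_simps power2_eq_square)
  moreover have "a\<^sup>2 * (c - b) > 0"
    using \<open>a \<noteq> 0\<close> \<open>c - b > 0\<close> by simp
  ultimately have "a * t + b * t\<^sup>2 < 0"
    using \<open>c > 0\<close> by simp
  with assms show False by (meson not_le)
qed

lemma psd_form_null_vector:
  assumes sym: "\<forall>i<n. \<forall>j<n. B i j = B j i"
    and psd: "\<And>w. 0 \<le> bilin_form n B w w"
    and null: "bilin_form n B v v = 0"
  shows "\<forall>i<n. (\<Sum>j<n. B i j * v j) = 0"
proof -
  have orth: "bilin_form n B w v = 0" for w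
  proof -
    have "0 \<le> 2 * bilin_form n B w v * t + bilin_form n B w w * t\<^sup>2" for t
      using psd[of "\<lambda>i. v i + t * w i"]
      by (simp add: bilin_form_add_scaled bilin_form_commute[OF sym, of v w] null algebra_simps)
    then show ?thesis
      using linear_coeff_zero_if_nonneg by fastforce
  qed
  have "(\<Sum>i<n. (\<Sum>j<n. B i j * v j)\<^sup>2) = 0"
    using orth[of "\<lambda>i. \<Sum>j<n. B i j * v j"] by (simp add: bilin_form_image_left)
  then show ?thesis by (simp add: sum_nonneg_eq_0_iff)
qed

lemma compact_unit_vecs_on: "compact (unit_vecs_on n)"
proof -
  define K where "K = PiE UNIV (\<lambda>i::nat. if i < n then {-1..1::real} else {0})"
  have "compactin (product_topology (\<lambda>i. euclidean) UNIV) K"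
    unfolding K_def compactin_PiE by auto
  then have "compact K"
    by (simp add: euclidean_product_topology)
  moreover have "closed (unit_vecs_on n)"
  proof -
    have "closed {v::nat \<Rightarrow> real. (\<Sum>i<n. v i ^ 2) = 1}"
      by (intro closed_Collect_eq continuous_intros continuous_on_product_coordinates)
    moreover have "closed {v::nat \<Rightarrow> real. \<forall>i\<ge>n. v i = 0}"
      by (intro closed_Collect_all closed_Collect_imp closed_Collect_eq continuous_intros
          continuous_on_product_coordinates) auto
    ultimately show ?thesis
      unfolding unit_vecs_on_def by (simp add: Collect_conj_eq closed_Int)
  qed
  moreover have "unit_vecs_on n \<subseteq> K"
  proof
    fix v assume v: "v \<in> unit_vecs_on n"
    have "\<bar>v i\<bar> \<le> 1" if "i < n" for i
    proof -
      have "v i ^ 2 \<le> (\<Sum>i<n. v i ^ 2)"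
        by (rule member_le_sum) (use that in auto)
      with v show ?thesis
        by (simp add: unit_vecs_on_def abs_square_le_1)
    qed
    with v show "v \<in> K"
      unfolding K_def unit_vecs_on_def by (auto simp: abs_le_iff)
  qed
  ultimately show ?thesis
    by (metis compact_Int_closed inf.absorb_iff2)
qed

lemma bilin_form_attains_max:
  assumes "n > 0"
  shows "\<exists>v\<in>unit_vecs_on n. \<forall>w\<in>unit_vecs_on n. bilin_form n C w w \<le> bilin_form n C v v"
proof (rule continuous_attains_sup[OF compact_unit_vecs_on])
  show "unit_vecs_on n \<noteq> {}"
    using assms
    by (auto simp: unit_vecs_on_def if_distrib[of "\<lambda>x. x ^ 2"] cong: if_cong
        intro!: exI[of _ "\<lambda>i. if i = 0 then 1 else 0 :: real"])
  show "continuous_on (unit_vecs_on n) (\<lambda>w. bilin_form n C w w)"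
    unfolding bilin_form_def
    by (rule continuous_on_subset[OF _ subset_UNIV]) (intro continuous_intros continuous_on_product_coordinates)
qed

lemma bilin_form_le_of_unit_bound:
  assumes bound: "\<forall>z\<in>unit_vecs_on n. bilin_form n C z z \<le> \<mu>"
  shows "bilin_form n C w w \<le> \<mu> * (\<Sum>i<n. w i ^ 2)"
proof (cases "(\<Sum>i<n. w i ^ 2) = 0")
  case True
  then have "\<forall>i<n. w i = 0"
    by (simp add: sum_nonneg_eq_0_iff)
  with True show ?thesis
    by (simp add: bilin_form_def)
next
  case False
  define s where "s = (\<Sum>i<n. w i ^ 2)"
  have "s > 0"
    using False unfolding s_def by (simp add: order_neq_le_trans sum_nonneg)
  define c where "c = 1 / sqrt s"
  have c2: "c\<^sup>2 = 1 / s"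
    unfolding c_def using \<open>s > 0\<close> by (simp add: power_divide)
  define z where "z = (\<lambda>i. if i < n then c * w i else 0)"
  have "(\<Sum>i<n. z i ^ 2) = c\<^sup>2 * s"
    unfolding z_def s_def by (simp add: sum_distrib_left power_mult_distrib)
  then have "z \<in> unit_vecs_on n"
    unfolding unit_vecs_on_def z_def using c2 \<open>s > 0\<close> by simp
  with bound have "bilin_form n C z z \<le> \<mu>"
    by blast
  moreover have "bilin_form n C z z = c\<^sup>2 * bilin_form n C w w"
    unfolding bilin_form_scale[symmetric] by (simp add: bilin_form_def z_def)
  ultimately have "bilin_form n C w w / s \<le> \<mu>"
    using c2 by simp
  then show ?thesis
    using \<open>s > 0\<close> unfolding s_def by (simp add: field_simps)
qed

lemma symmetric_eigenvalue_ge_bilin_form: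
  assumes sym: "\<forall>i<n. \<forall>j<n. C i j = C j i"
    and y: "(\<Sum>i<n. y i ^ 2) = 1"
  shows "\<exists>\<mu> v. (\<forall>i<n. (\<Sum>j<n. C i j * v j) = \<mu> * v i) \<and> (\<exists>i<n. v i \<noteq> 0)
           \<and> bilin_form n C y y \<le> \<mu>"
proof -
  have "n > 0"
    using y by (cases n) auto
  then obtain v where v: "v \<in> unit_vecs_on n"
    and max: "\<forall>w\<in>unit_vecs_on n. bilin_form n C w w \<le> bilin_form n C v v"
    using bilin_form_attains_max by blast
  define \<mu> where "\<mu> = bilin_form n C v v"
  have bound: "bilin_form n C w w \<le> \<mu> * (\<Sum>i<n. w i ^ 2)" for w
    using bilin_form_le_of_unit_bound max unfolding \<mu>_def by blast
  define B where "B = (\<lambda>i j. (if i = j then \<mu> else 0) - C i j)"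
  have "\<forall>i<n. (\<Sum>j<n. B i j * v j) = 0"
  proof (rule psd_form_null_vector)
    show "\<forall>i<n. \<forall>j<n. B i j = B j i"
      using sym unfolding B_def by simp
    show "0 \<le> bilin_form n B w w" for w
      using bound[of w] unfolding B_def bilin_form_diag_minus by (simp add: power2_eq_square)
    show "bilin_form n B v v = 0"
      using v unfolding B_def bilin_form_diag_minus \<mu>_def unit_vecs_on_def
      by (simp add: power2_eq_square)
  qed
  then have "\<forall>i<n. (\<Sum>j<n. C i j * v j) = \<mu> * v i"
    unfolding B_def by (simp add: left_diff_distrib sum_subtractf if_distrib[of "\<lambda>x. x * _"] cong: if_cong)
  moreover have "\<exists>i<n. v i \<noteq> 0"
  proof (rule ccontr)
    assume "\<not> (\<exists>i<n. v i \<noteq> 0)"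
    then have "(\<Sum>i<n. v i ^ 2) = 0"
      by simp
    with v show False
      by (simp add: unit_vecs_on_def)
  qed
  moreover have "bilin_form n C y y \<le> \<mu>"
    using bound[of y] y by simp
  ultimately show ?thesis
    by blast
qed

lemma idx_lists_0 [simp]: "idx_lists 0 d = {[]}"
  by (auto simp: idx_lists_def)

lemma sum_idx_lists_add:
  "(\<Sum>l\<in>idx_lists (a + b) d. g l) = (\<Sum>p\<in>idx_lists a d. \<Sum>q\<in>idx_lists b d. g (p @ q))"
proof -
  have "bij_betw (\<lambda>(p, q). p @ q) (idx_lists a d \<times> idx_lists b d) (idx_lists (a + b) d)"
  proof (rule bij_betw_imageI)
    show "inj_on (\<lambda>(p, q). p @ q) (idx_lists a d \<times> idx_lists b d)"
      by (auto simp: inj_on_def idx_lists_def)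
    show "(\<lambda>(p, q). p @ q) ` (idx_lists a d \<times> idx_lists b d) = idx_lists (a + b) d"
    proof (intro equalityI subsetI)
      fix l assume "l \<in> idx_lists (a + b) d"
      then have "(take a l, drop a l) \<in> idx_lists a d \<times> idx_lists b d"
        unfolding idx_lists_def by (auto dest: in_set_takeD in_set_dropD)
      then show "l \<in> (\<lambda>(p, q). p @ q) ` (idx_lists a d \<times> idx_lists b d)"
        by (metis (no_types, lifting) append_take_drop_id case_prod_conv image_eqI)
    qed (auto simp: idx_lists_def)
  qed
  then show ?thesis
    by (simp add: sum.reindex_bij_betw[symmetric] sum.cartesian_product case_prod_beta)
qed

lemma sum_idx_lists_Suc:
  "(\<Sum>l\<in>idx_lists (Suc k) d. g l) = (\<Sum>i<d. \<Sum>js\<in>idx_lists k d. g (i # js))"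
proof -
  have "bij_betw (\<lambda>i. [i]) {..<d} (idx_lists 1 d)"
    by (rule bij_betw_imageI) (auto simp: inj_on_def idx_lists_def length_Suc_conv)
  then have "(\<Sum>p\<in>idx_lists 1 d. \<Sum>q\<in>idx_lists k d. g (p @ q)) = (\<Sum>i<d. \<Sum>js\<in>idx_lists k d. g (i # js))"
    by (simp add: sum.reindex_bij_betw[symmetric])
  then show ?thesis
    using sum_idx_lists_add[where a = 1 and b = k and d = d and g = g] by simp
qed

lemma sum_idx_lists_prod_list_power2:
  "(\<Sum>l\<in>idx_lists k d. (prod_list (map x l))\<^sup>2) = (\<Sum>i<d. (x i :: real)\<^sup>2) ^ k"
proof (induction k)
  case (Suc k)
  have "(\<Sum>l\<in>idx_lists (Suc k) d. (prod_list (map x l))\<^sup>2)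
      = (\<Sum>i<d. x i ^ 2 * (\<Sum>js\<in>idx_lists k d. (prod_list (map x js))\<^sup>2))"
    by (simp add: sum_idx_lists_Suc power_mult_distrib sum_distrib_left)
  with Suc show ?case
    by (simp add: sum_distrib_right)
qed simp

lemma prod_lessThan_length_nth: "(\<Prod>k<length xs. f (xs ! k)) = prod_list (map f xs)"
  by (induction xs) (simp_all add: prod.lessThan_Suc_shift del: prod.lessThan_Suc)

lemma digits_Suc: "digits (Suc m) d a = (a mod d) # digits m d (a div d)"
  unfolding digits_def
  by (simp add: upt_conv_Cons map_Suc_upt[symmetric] del: upt_Suc) (simp add: div_mult2_eq)

lemma digits_in_idx_lists: "d \<ge> 1 \<Longrightarrow> digits m d a \<in> idx_lists m d"
  unfolding digits_def idx_lists_def by auto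

lemma inj_on_digits: "inj_on (digits m d) {..<d ^ m}"
proof (induction m)
  case (Suc m)
  show ?case
  proof (rule inj_onI)
    fix a b assume "a \<in> {..<d ^ Suc m}" "b \<in> {..<d ^ Suc m}"
      and eq: "digits (Suc m) d a = digits (Suc m) d b"
    then have "a div d < d ^ m" "b div d < d ^ m"
      by (simp_all add: less_mult_imp_div_less mult.commute)
    with eq Suc.IH have "a div d = b div d"
      by (simp add: digits_Suc inj_on_def)
    moreover have "a mod d = b mod d"
      using eq by (simp add: digits_Suc)
    ultimately show "a = b"
      by (metis div_mult_mod_eq)
  qed
qed (simp add: inj_on_def)

lemma digits_image: "d \<ge> 1 \<Longrightarrow> digits m d ` {..<d ^ m} = idx_lists m d"
proof (induction m)
  case 0
  then show ?case by (auto simp: digits_def)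
next
  case (Suc m)
  show ?case
  proof (intro equalityI subsetI)
    fix l assume "l \<in> idx_lists (Suc m) d"
    then obtain i js where l: "l = i # js" and "i < d" and "js \<in> idx_lists m d"
      by (auto simp: idx_lists_def length_Suc_conv)
    with Suc obtain b where "b < d ^ m" and js: "js = digits m d b"
      by auto
    define a where "a = i + d * b"
    have "a < d * (b + 1)"
      using \<open>i < d\<close> unfolding a_def by simp
    also have "\<dots> \<le> d ^ Suc m"
      using \<open>b < d ^ m\<close> by (simp del: mult_Suc_right add: mult_le_mono2)
    finally have "a < d ^ Suc m" .
    moreover have "digits (Suc m) d a = l"
      using \<open>i < d\<close> l js by (simp add: digits_Suc a_def)
    ultimately show "l \<in> digits (Suc m) d ` {..<d ^ Suc m}"
      by blast
  qed (use Suc.prems digits_in_idx_lists in blast)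
qed

lemma bij_betw_digits: "d \<ge> 1 \<Longrightarrow> bij_betw (digits m d) {..<d ^ m} (idx_lists m d)"
  by (simp add: bij_betw_def inj_on_digits digits_image)

definition tensor_power :: "nat \<Rightarrow> nat \<Rightarrow> (nat \<Rightarrow> real) \<Rightarrow> nat \<Rightarrow> real"
  where "tensor_power m d x a = prod_list (map x (digits m d a))"

lemma sum_tensor_power_power2:
  assumes "d \<ge> 1"
  shows "(\<Sum>a<d ^ m. (tensor_power m d x a)\<^sup>2) = (\<Sum>i<d. (x i)\<^sup>2) ^ m"
proof -
  have "(\<Sum>a<d ^ m. (tensor_power m d x a)\<^sup>2) = (\<Sum>l\<in>idx_lists m d. (prod_list (map x l))\<^sup>2)"
    unfolding tensor_power_def by (rule sum.reindex_bij_betw[OF bij_betw_digits[OF assms]])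
  then show ?thesis
    by (simp add: sum_idx_lists_prod_list_power2)
qed

lemma bilin_form_unfold_tensor_power:
  assumes "d \<ge> 1"
  shows "bilin_form (d ^ m) (\<lambda>a b. A (digits m d a @ digits m d b)) (tensor_power m d x) (tensor_power m d x)
       = (\<Sum>l\<in>idx_lists (m + m) d. A l * prod_list (map x l))"
proof -
  note reindex = sum.reindex_bij_betw[OF bij_betw_digits[OF assms]]
  have "bilin_form (d ^ m) (\<lambda>a b. A (digits m d a @ digits m d b)) (tensor_power m d x) (tensor_power m d x)
      = (\<Sum>a<d ^ m. \<Sum>q\<in>idx_lists m d. A (digits m d a @ q) * tensor_power m d x a * prod_list (map x q))"
    unfolding bilin_form_def tensor_power_def by (intro sum.cong refl reindex)
  also have "\<dots> = (\<Sum>p\<in>idx_lists m d. \<Sum>q\<in>idx_lists m d. A (p @ q) * prod_list (map x p) * prod_list (map x q))"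
    unfolding tensor_power_def by (rule reindex)
  finally show ?thesis
    by (simp add: sum_idx_lists_add mult.assoc)
qed

lemma sum_mult_tensor_apply:
  assumes "m \<ge> 1"
  shows "(\<Sum>i<d. x i * tensor_apply m d A x i) = (\<Sum>l\<in>idx_lists (2 * m) d. A l * prod_list (map x l))"
proof -
  obtain k where k: "2 * m = Suc k"
    using assms by (cases "2 * m") auto
  have prod_eq: "(\<Prod>j<k. x (js ! j)) = prod_list (map x js)" if "js \<in> idx_lists k d" for js
    using that prod_lessThan_length_nth[of x js] by (simp add: idx_lists_def)
  have "(\<Sum>i<d. x i * tensor_apply m d A x i)
      = (\<Sum>i<d. \<Sum>js\<in>idx_lists k d. x i * (A (i # js) * (\<Prod>j<k. x (js ! j))))"
    unfolding tensor_apply_def k by (simp add: sum_distrib_left)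
  also have "\<dots> = (\<Sum>i<d. \<Sum>js\<in>idx_lists k d. A (i # js) * prod_list (map x (i # js)))"
    by (intro sum.cong refl) (simp add: prod_eq mult.left_commute)
  finally show ?thesis
    unfolding k sum_idx_lists_Suc .
qed

lemma eigenvalue_mat_of_eigen_eq:
  assumes "\<forall>i<n. (\<Sum>j<n. C i j * v j) = \<mu> * v i" and "\<exists>i<n. v i \<noteq> 0"
  shows "eigenvalue (mat n n (\<lambda>(i, j). C i j)) \<mu>"
  unfolding eigenvalue_def eigenvector_def
proof (intro exI conjI)
  show "vec n v \<in> carrier_vec (dim_row (mat n n (\<lambda>(i, j). C i j)))"
    by simp
  show "vec n v \<noteq> 0\<^sub>v (dim_row (mat n n (\<lambda>(i, j). C i j)))"
    using assms(2) by (auto simp: vec_eq_iff)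
  show "mat n n (\<lambda>(i, j). C i j) *\<^sub>v vec n v = \<mu> \<cdot>\<^sub>v vec n v"
    using assms(1)
    by (auto intro!: eq_vecI simp: mult_mat_vec_def scalar_prod_def row_def lessThan_atLeast0)
qed

lemma Z_eigenvalue_le_einstein_eigenvalue:
  assumes "m \<ge> 1" and "d \<ge> 1"
    and sym: "einstein_symmetric m d A"
    and "Z_eigenvalue m d A lam"
  shows "\<exists>\<mu>. einstein_eigenvalue m d A \<mu> \<and> lam \<le> \<mu>"
proof -
  obtain x where x: "(\<Sum>i<d. x i ^ 2) = 1" and eig: "\<forall>i<d. tensor_apply m d A x i = lam * x i"
    using \<open>Z_eigenvalue m d A lam\<close> unfolding Z_eigenvalue_def by blast
  define C where "C = (\<lambda>a b. A (digits m d a @ digits m d b))"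
  have C_sym: "\<forall>a<d ^ m. \<forall>b<d ^ m. C a b = C b a"
    using sym digits_in_idx_lists[OF \<open>d \<ge> 1\<close>] unfolding C_def einstein_symmetric_def by blast
  have "bilin_form (d ^ m) C (tensor_power m d x) (tensor_power m d x) = (\<Sum>i<d. x i * tensor_apply m d A x i)"
    unfolding C_def bilin_form_unfold_tensor_power[OF \<open>d \<ge> 1\<close>] sum_mult_tensor_apply[OF \<open>m \<ge> 1\<close>]
    by (simp add: mult_2)
  also have "\<dots> = (\<Sum>i<d. lam * x i ^ 2)"
    using eig by (intro sum.cong) (simp_all add: power2_eq_square)
  also have "\<dots> = lam"
    using x by (simp add: sum_distrib_left[symmetric])
  finally have form_eq: "bilin_form (d ^ m) C (tensor_power m d x) (tensor_power m d x) = lam" .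
  have "(\<Sum>a<d ^ m. (tensor_power m d x a)\<^sup>2) = 1"
    using sum_tensor_power_power2[OF \<open>d \<ge> 1\<close>] x by simp
  then obtain \<mu> v where eig_eq: "\<forall>a<d ^ m. (\<Sum>b<d ^ m. C a b * v b) = \<mu> * v a"
      and nonzero: "\<exists>a<d ^ m. v a \<noteq> 0"
      and "bilin_form (d ^ m) C (tensor_power m d x) (tensor_power m d x) \<le> \<mu>"
    using symmetric_eigenvalue_ge_bilin_form[OF C_sym] by blast
  moreover have "einstein_eigenvalue m d A \<mu>"
    using eigenvalue_mat_of_eigen_eq[OF eig_eq nonzero]
    by (simp add: einstein_eigenvalue_def unfold_mat_def C_def)
  ultimately show ?thesis
    using form_eq by blast
qed

lemma finite_einstein_eigenvalues: "finite {lam. einstein_eigenvalue m d A lam}"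
proof -
  have M: "unfold_mat m d A \<in> carrier_mat (d ^ m) (d ^ m)"
    by (simp add: unfold_mat_def)
  have "char_poly (unfold_mat m d A) \<noteq> 0"
    using degree_monic_char_poly[OF M] by auto
  moreover have "{lam. einstein_eigenvalue m d A lam} \<subseteq> {x. poly (char_poly (unfold_mat m d A)) x = 0}"
    using eigenvalue_root_char_poly[OF M] unfolding einstein_eigenvalue_def by auto
  ultimately show ?thesis
    by (rule finite_subset[OF _ poly_roots_finite, rotated])
qed

theorem lemma2p4:
  fixes m d :: nat and A :: tensor
  assumes "m \<ge> 1" and "d \<ge> 1"
    and "einstein_symmetric m d A"
    and "\<exists>lam. Z_eigenvalue m d A lam"
  shows "lambda_E_max m d A \<ge> lambda_Z_max m d A"
  unfolding lambda_Z_max_def lambda_E_max_def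
proof (rule cSup_least)
  show "{lam. Z_eigenvalue m d A lam} \<noteq> {}"
    using assms(4) by auto
  fix lam assume "lam \<in> {lam. Z_eigenvalue m d A lam}"
  then obtain \<mu> where "einstein_eigenvalue m d A \<mu>" "lam \<le> \<mu>"
    using Z_eigenvalue_le_einstein_eigenvalue[OF assms(1-3)] by auto
  then show "lam \<le> Max {lam. einstein_eigenvalue m d A lam}"
    using finite_einstein_eigenvalues by (meson Max_ge mem_Collect_eq order_trans)
qed

end
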